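(* For any $(\Sigma_{\rho_0},\dots,\Sigma_{\rho_{T-1}})\in\mathcal M_T$, the matrices $\Pi_k$ satisfy $\hat\Pi_k\succeq\Pi_k\succeq\check\Pi_k\succeq0$ for all $k\in\{0,\dots,T\}$, and $\Sigma_{Q_k}$ satisfies $\hat\Sigma_{Q_k}\succeq\Sigma_{Q_k}\succeq\check\Sigma_{Q_k}\succ0$ for all $k\in\{0,\dots,T-1\}$, where $\hat\Sigma_{Q_k}=\varepsilon(R_k+B_k^\top\check\Pi_{k+1}B_k)^{-1}$ and $\check\Sigma_{Q_k}=\varepsilon(R_k+B_k^\top\hat\Pi_{k+1}B_k)^{-1}$.
   Context: Fix integers $n,m,T\ge1$, $\varepsilon>0$, $A_k\in\mathbb R^{n\times n}$, $B_k\in\mathbb R^{n\times m}$, symmetric positive definite $R_k\in\mathbb R^{m\times m}$ ($k=0,\dots,T-1$) and $F\in\mathbb R^{n\times n}$. $\mathcal M_T=(\mathbb S^m_{\succeq0})^T$, $\mathbb S^m_{\succeq0}$ the symmetric PSD $m\times m$ matrices; $\Sigma^{1/2}$ the PSD square root. For $(\Sigma_{\rho_0},\dots,\Sigma_{\rho_{T-1}})\in\mathcal M_T$: $\Pi_T=F$, $C_k=(R_k+B_k^\top\Pi_{k+1}B_k)/\varepsilon$, $\Pi_k=A_k^\top\Pi_{k+1}A_k-\frac1\varepsilon A_k^\top\Pi_{k+1}B_k\Sigma_{\rho_k}^{1/2}(I+\Sigma_{\rho_k}^{1/2}C_k\Sigma_{\rho_k}^{1/2})^{-1}\Sigma_{\rho_k}^{1/2}B_k^\top\Pi_{k+1}A_k$,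 $\Sigma_{Q_k}=\varepsilon(R_k+B_k^\top\Pi_{k+1}B_k)^{-1}$. Also $\check\Pi_T=F$, $\check\Pi_k=A_k^\top\check\Pi_{k+1}A_k-A_k^\top\check\Pi_{k+1}B_k(R_k+B_k^\top\check\Pi_{k+1}B_k)^{-1}B_k^\top\check\Pi_{k+1}A_k$ ($k=T-1,\dots,0$), and $\hat\Pi_T=F$, $\hat\Pi_k=A_k^\top\cdots A_{T-1}^\top FA_{T-1}\cdots A_k$ for $k\le T-1$. *)

theory Defs
  imports "HOL-Analysis.Analysis"
begin

definition psd :: "real^'n^'n \<Rightarrow> bool" where
  "psd M \<longleftrightarrow> transpose M = M \<and> (\<forall>x. 0 \<le> x \<bullet> (M *v x))"

definition pd :: "real^'n^'n \<Rightarrow> bool" where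
  "pd M \<longleftrightarrow> transpose M = M \<and> (\<forall>x. x \<noteq> 0 \<longrightarrow> 0 < x \<bullet> (M *v x))"

definition loewner_ge :: "real^'n^'n \<Rightarrow> real^'n^'n \<Rightarrow> bool" where
  "loewner_ge X Y \<longleftrightarrow> psd (X - Y)"

definition psd_sqrt :: "real^'n^'n \<Rightarrow> real^'n^'n" where
  "psd_sqrt M = (THE S. psd S \<and> S ** S = M)"

(* backward recursion: X_T = F, X_k = step k X_{k+1}, k = T-1,...,0 *)
primrec bwd_aux :: "nat \<Rightarrow> 'a \<Rightarrow> (nat \<Rightarrow> 'a \<Rightarrow> 'a) \<Rightarrow> nat \<Rightarrow> 'a" where
  "bwd_aux T F step 0 = F"
| "bwd_aux T F step (Suc j) = step (T - Suc j) (bwd_aux T F step j)"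

definition bwd :: "nat \<Rightarrow> 'a \<Rightarrow> (nat \<Rightarrow> 'a \<Rightarrow> 'a) \<Rightarrow> nat \<Rightarrow> 'a" where
  "bwd T F step k = bwd_aux T F step (T - k)"

(* \<Pi>_k for given covariances Sig k = \<Sigma>_{\<rho>_k} *)
definition Pi_step ::
  "real \<Rightarrow> (nat \<Rightarrow> real^'n^'n) \<Rightarrow> (nat \<Rightarrow> real^'m^'n) \<Rightarrow> (nat \<Rightarrow> real^'m^'m)
   \<Rightarrow> (nat \<Rightarrow> real^'m^'m) \<Rightarrow> nat \<Rightarrow> real^'n^'n \<Rightarrow> real^'n^'n" where
  "Pi_step \<epsilon> A B R Sig k P =
     (let C = (1/\<epsilon>) *\<^sub>R (R k + transpose (B k) ** P ** B k);
          S = psd_sqrt (Sig k)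
      in transpose (A k) ** P ** A k
         - (1/\<epsilon>) *\<^sub>R (transpose (A k) ** P ** B k ** S
              ** matrix_inv (mat 1 + S ** C ** S) ** S ** transpose (B k) ** P ** A k))"

definition Pi ::
  "real \<Rightarrow> (nat \<Rightarrow> real^'n^'n) \<Rightarrow> (nat \<Rightarrow> real^'m^'n) \<Rightarrow> (nat \<Rightarrow> real^'m^'m)
   \<Rightarrow> real^'n^'n \<Rightarrow> (nat \<Rightarrow> real^'m^'m) \<Rightarrow> nat \<Rightarrow> nat \<Rightarrow> real^'n^'n" where
  "Pi \<epsilon> A B R F Sig T = bwd T F (Pi_step \<epsilon> A B R Sig)"

definition SigmaQ ::
  "real \<Rightarrow> (nat \<Rightarrow> real^'n^'n) \<Rightarrow> (nat \<Rightarrow> real^'m^'n) \<Rightarrow> (nat \<Rightarrow> real^'m^'m)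
   \<Rightarrow> real^'n^'n \<Rightarrow> (nat \<Rightarrow> real^'m^'m) \<Rightarrow> nat \<Rightarrow> nat \<Rightarrow> real^'m^'m" where
  "SigmaQ \<epsilon> A B R F Sig T k =
     \<epsilon> *\<^sub>R matrix_inv (R k + transpose (B k) ** Pi \<epsilon> A B R F Sig T (Suc k) ** B k)"

definition Pi_check ::
  "(nat \<Rightarrow> real^'n^'n) \<Rightarrow> (nat \<Rightarrow> real^'m^'n) \<Rightarrow> (nat \<Rightarrow> real^'m^'m)
   \<Rightarrow> real^'n^'n \<Rightarrow> nat \<Rightarrow> nat \<Rightarrow> real^'n^'n" where
  "Pi_check A B R F T = bwd T F (\<lambda>k P.
     transpose (A k) ** P ** A k
     - transpose (A k) ** P ** B k ** matrix_inv (R k + transpose (B k) ** P ** B k)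
       ** transpose (B k) ** P ** A k)"

(* \<hat>\<Pi>_k = A_k^T ... A_{T-1}^T F A_{T-1} ... A_k, written as the recursion
   \<hat>\<Pi>_T = F, \<hat>\<Pi>_k = A_k^T \<hat>\<Pi>_{k+1} A_k *)
definition Pi_hat ::
  "(nat \<Rightarrow> real^'n^'n) \<Rightarrow> real^'n^'n \<Rightarrow> nat \<Rightarrow> nat \<Rightarrow> real^'n^'n" where
  "Pi_hat A F T = bwd T F (\<lambda>k P. transpose (A k) ** P ** A k)"

end

theory Submission
  imports Defs
begin

text \<open>
  Write G(P) = R + B' P B and y = B' P A x. For psd P the Riccati step satisfies
  x' (riccati_step P) x = min over u of (A x + B u)' P (A x + B u) + u' R u, so it maps psd
  matrices to psd matrices and is monotone in P. The step defining Pi_k subtracts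
  (1/eps) y' S (I + S C S)^-1 S y, where S is the psd square root of Sigma_rho_k and
  C = G(P)/eps; this is nonnegative and, by the push-through bound X (I + X' C X)^-1 X' <= C^-1,
  at most y' G(P)^-1 y. So the step lies between A' P A and the Riccati step, and backward
  induction from Pi_T = F gives Pi_hat_k >= Pi_k >= Pi_check_k >= 0. Inversion reverses the
  Loewner order, which turns this into the bounds on Sigma_Q_k. The symmetry of S requires the
  psd square root to be well defined; its existence and uniqueness come from the spectral
  theorem, proved by maximising the Rayleigh quotient.
\<close>

lemma inner_transpose_matrix: "(x::real^'n) \<bullet> (transpose A *v y) = (A *v x) \<bullet> (y::real^'m)"
  by (metis dot_lmul_matrix inner_commute transpose_matrix_vector)

lemma inner_symmetric_matrix:
  "transpose A = A \<Longrightarrow> x \<bullet> (A *v y) = y \<bullet> (A *v (x::real^'n))"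
  by (metis inner_transpose_matrix inner_commute)

lemma symmetric_matrixI:
  fixes A :: "real^'n^'n"
  assumes "\<And>x y. y \<bullet> (A *v x) = x \<bullet> (A *v y)"
  shows "transpose A = A"
  unfolding matrix_eq
  by (metis assms inner_transpose_matrix inner_commute euclidean_eqI)

lemma transpose_add: "transpose (X + Y) = transpose X + transpose (Y::real^'n^'m)"
  by (simp add: transpose_def vec_eq_iff)

lemma transpose_diff: "transpose (X - Y) = transpose X - transpose (Y::real^'n^'m)"
  by (simp add: transpose_def vec_eq_iff)

lemma matrix_vector_mult_uminus: "A *v (- x) = - (A *v (x::real^'n))"
  by (simp add: matrix_vector_mult_def vec_eq_iff sum_negf)

lemma matrix_mul_diff_middle:
  "A ** (P - Q) ** X = A ** P ** X - A ** Q ** (X::real^'k^'m)"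
  by (simp add: matrix_matrix_mult_def vec_eq_iff sum_subtractf left_diff_distrib right_diff_distrib
      sum_distrib_right)

lemma quadratic_form_congruence:
  fixes X :: "real^'n^'m" and P :: "real^'m^'m"
  shows "x \<bullet> ((transpose X ** P ** X) *v x) = (X *v x) \<bullet> (P *v (X *v x))"
  unfolding matrix_vector_mul_assoc[symmetric] by (rule inner_transpose_matrix)

lemma quadratic_form_square:
  "transpose S = S \<Longrightarrow> x \<bullet> ((S ** S) *v x) = (S *v x) \<bullet> (S *v (x::real^'n))"
  using quadratic_form_congruence[of x S "mat 1"] by simp

section \<open>Eigenvectors of symmetric matrices\<close>

lemma quadratic_nonpos_linear_coeff_eq_0:
  fixes a b :: real
  assumes "\<And>t. a * t + b * t\<^sup>2 \<le> 0"
  shows "a = 0"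
proof -
  have "b \<le> 0" using assms[of 1] assms[of "-1"] by simp
  then have "a * (a / (1 - b)) + b * (a / (1 - b))\<^sup>2 = (a / (1 - b))\<^sup>2"
    by (simp add: divide_simps power2_eq_square) (simp add: algebra_simps)
  then have "(a / (1 - b))\<^sup>2 \<le> 0" using assms by metis
  with \<open>b \<le> 0\<close> show "a = 0" by simp
qed

lemma rayleigh_maximizer_eigenvector:
  fixes M :: "real^'n^'n"
  assumes sym: "transpose M = M" and V: "subspace V" and inv: "\<And>x. x \<in> V \<Longrightarrow> M *v x \<in> V"
    and u: "u \<in> V" "u \<bullet> u = 1"
    and max: "\<And>x. x \<in> V \<Longrightarrow> x \<bullet> (M *v x) \<le> (u \<bullet> (M *v u)) * (x \<bullet> x)"
  shows "M *v u = (u \<bullet> (M *v u)) *\<^sub>R u"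
proof -
  define l where "l = u \<bullet> (M *v u)"
  define y where "y = M *v u - l *\<^sub>R u"
  have "y \<in> V" unfolding y_def using V u inv by (intro subspace_diff subspace_scale) auto
  have "y \<bullet> y = y \<bullet> (M *v u - l *\<^sub>R u)" unfolding y_def ..
  then have lin: "y \<bullet> (M *v u) - l * (u \<bullet> y) = y \<bullet> y"
    by (simp add: inner_diff_right inner_commute)
  have "2 * (y \<bullet> (M *v u) - l * (u \<bullet> y)) * t + (y \<bullet> (M *v y) - l * (y \<bullet> y)) * t\<^sup>2 \<le> 0" for t
  proof -
    have "u + t *\<^sub>R y \<in> V" using V u \<open>y \<in> V\<close> by (intro subspace_add subspace_scale) auto
    from max[OF this] have le: "(u + t *\<^sub>R y) \<bullet> (M *v (u + t *\<^sub>R y)) \<le> l * ((u + t *\<^sub>R y) \<bullet> (u + t *\<^sub>R y))"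
      by (simp add: l_def)
    have "(u + t *\<^sub>R y) \<bullet> (M *v (u + t *\<^sub>R y)) = l + 2 * t * (y \<bullet> (M *v u)) + t\<^sup>2 * (y \<bullet> (M *v y))"
      using inner_symmetric_matrix[OF sym, of u y]
      by (simp add: l_def matrix_vector_right_distrib matrix_vector_mult_scaleR inner_add_left
          inner_add_right power2_eq_square algebra_simps)
    moreover have "(u + t *\<^sub>R y) \<bullet> (u + t *\<^sub>R y) = 1 + 2 * t * (u \<bullet> y) + t\<^sup>2 * (y \<bullet> y)"
      using u(2) by (simp add: inner_add_left inner_add_right inner_commute power2_eq_square algebra_simps)
    ultimately show ?thesis using le by (simp add: algebra_simps)
  qed
  then have "2 * (y \<bullet> y) = 0" unfolding lin by (rule quadratic_nonpos_linear_coeff_eq_0)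
  then show ?thesis by (simp add: y_def l_def)
qed

lemma symmetric_invariant_subspace_eigenvector:
  fixes M :: "real^'n^'n"
  assumes sym: "transpose M = M" and V: "subspace V" "V \<noteq> {0}"
    and inv: "\<And>x. x \<in> V \<Longrightarrow> M *v x \<in> V"
  obtains u where "u \<in> V" "norm u = 1" "M *v u = (u \<bullet> (M *v u)) *\<^sub>R u"
proof -
  obtain x0 where x0: "x0 \<in> V" "x0 \<noteq> 0" using V subspace_0 by blast
  define K where "K = V \<inter> sphere 0 1"
  have "compact K" unfolding K_def by (intro closed_Int_compact closed_subspace V compact_sphere)
  moreover have "x0 /\<^sub>R norm x0 \<in> K" using x0 V by (simp add: K_def subspace_scale)
  then have "K \<noteq> {}" by blast
  moreover have "continuous_on K (\<lambda>x. x \<bullet> (M *v x))" by (intro continuous_intros)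
  ultimately obtain u where u: "u \<in> K" and umax: "\<And>y. y \<in> K \<Longrightarrow> y \<bullet> (M *v y) \<le> u \<bullet> (M *v u)"
    using continuous_attains_sup by metis
  have "x \<bullet> (M *v x) \<le> (u \<bullet> (M *v u)) * (x \<bullet> x)" if "x \<in> V" for x
  proof (cases "x = 0")
    case False
    then have "x /\<^sub>R norm x \<in> K" using that V by (simp add: K_def subspace_scale)
    from umax[OF this] have "(x \<bullet> (M *v x)) / (norm x)\<^sup>2 \<le> u \<bullet> (M *v u)"
      by (simp add: matrix_vector_mult_scaleR power2_eq_square divide_inverse mult_ac)
    with False show ?thesis by (simp add: divide_le_eq power2_norm_eq_inner mult.commute)
  qed simp
  with u have "M *v u = (u \<bullet> (M *v u)) *\<^sub>R u"
    by (intro rayleigh_maximizer_eigenvector[OF sym V(1) inv]) (auto simp: K_def norm_eq_1)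
  with u that show thesis by (auto simp: K_def)
qed

definition orthonormal_eigenvectors :: "real^'n^'n \<Rightarrow> (real^'n) set \<Rightarrow> bool" where
  "orthonormal_eigenvectors M U \<longleftrightarrow> pairwise orthogonal U
     \<and> (\<forall>u\<in>U. norm u = 1 \<and> M *v u = (u \<bullet> (M *v u)) *\<^sub>R u)"

lemma orthonormal_eigenvectors_extend:
  fixes M :: "real^'n^'n"
  assumes sym: "transpose M = M" and U: "orthonormal_eigenvectors M U" "finite U"
    and card: "card U < CARD('n)"
  obtains v where "v \<notin> U" "orthonormal_eigenvectors M (insert v U)"
proof -
  define V where "V = {y. \<forall>x\<in>U. orthogonal x y}"
  have "subspace V" unfolding V_def by (rule subspace_orthogonal_to_vectors)
  moreover have "V \<noteq> {0}"
  proof -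
    have "dim U < DIM(real^'n)" using dim_le_card'[OF U(2)] card by simp
    then obtain x where "x \<noteq> 0" "\<And>y. y \<in> span U \<Longrightarrow> orthogonal x y"
      using orthogonal_to_subspace_exists by blast
    then have "x \<in> V" "x \<noteq> 0" by (auto simp: V_def orthogonal_commute span_base)
    then show ?thesis by blast
  qed
  moreover have "M *v y \<in> V" if "y \<in> V" for y
  proof -
    have "u \<bullet> (M *v y) = 0" if "u \<in> U" for u
    proof -
      have "u \<bullet> (M *v y) = y \<bullet> (M *v u)" by (rule inner_symmetric_matrix[OF sym])
      also have "\<dots> = (u \<bullet> (M *v u)) * (u \<bullet> y)"
        using U(1) \<open>u \<in> U\<close> by (metis inner_commute inner_scaleR_right orthonormal_eigenvectors_def)
      finally show ?thesis using \<open>y \<in> V\<close> \<open>u \<in> U\<close> by (simp add: V_def orthogonal_def)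
    qed
    then show ?thesis by (simp add: V_def orthogonal_def)
  qed
  ultimately obtain v where v: "v \<in> V" "norm v = 1" "M *v v = (v \<bullet> (M *v v)) *\<^sub>R v"
    using symmetric_invariant_subspace_eigenvector[OF sym] by blast
  have "v \<notin> U" using v by (auto simp: V_def orthogonal_def)
  moreover have "orthonormal_eigenvectors M (insert v U)"
    using U(1) v by (auto simp: orthonormal_eigenvectors_def V_def orthogonal_commute
        intro: pairwise_orthogonal_insert)
  ultimately show thesis by (rule that)
qed

theorem symmetric_matrix_orthonormal_eigenbasis:
  fixes M :: "real^'n^'n"
  assumes sym: "transpose M = M"
  obtains U where "orthonormal_eigenvectors M U" "finite U" "span U = UNIV"
proof -
  have "\<exists>U. orthonormal_eigenvectors M U \<and> finite U \<and> card U = k" if "k \<le> CARD('n)" for k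
    using that
  proof (induction k)
    case 0
    show ?case by (rule exI[of _ "{}"]) (simp add: orthonormal_eigenvectors_def)
  next
    case (Suc k)
    then obtain U where U: "orthonormal_eigenvectors M U" "finite U" "card U = k" by auto
    with Suc.prems obtain v where "v \<notin> U" "orthonormal_eigenvectors M (insert v U)"
      using orthonormal_eigenvectors_extend[OF sym] by (metis Suc_le_lessD)
    with U show ?case by (intro exI[of _ "insert v U"]) simp
  qed
  then obtain U where U: "orthonormal_eigenvectors M U" "finite U" "card U = CARD('n)" by blast
  have "independent U"
    using U(1) by (intro pairwise_orthogonal_independent) (auto simp: orthonormal_eigenvectors_def)
  then have "UNIV \<subseteq> span U" using U(3) by (intro card_ge_dim_independent) auto
  with U show thesis by (intro that) auto
qed

section \<open>Positive (semi)definite matrices and the Loewner order\<close>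

lemma psd_symmetric: "psd S \<Longrightarrow> transpose S = S"
  by (simp add: psd_def)

lemma psd_quadratic_nonneg: "psd S \<Longrightarrow> 0 \<le> x \<bullet> (S *v x)"
  by (simp add: psd_def)

lemma psd_add: "psd P \<Longrightarrow> psd Q \<Longrightarrow> psd (P + Q)"
  by (simp add: psd_def transpose_add matrix_vector_mult_add_rdistrib inner_add_right)

lemma psd_scaleR: "0 \<le> c \<Longrightarrow> psd P \<Longrightarrow> psd (c *\<^sub>R P)"
  by (simp add: psd_def transpose_scalar scaleR_matrix_vector_assoc[symmetric])

lemma psd_congruence: "psd P \<Longrightarrow> psd (transpose X ** P ** X)"
  by (simp add: psd_def quadratic_form_congruence matrix_transpose_mul matrix_mul_assoc)

lemma pd_imp_psd: "pd M \<Longrightarrow> psd M"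
  unfolding pd_def psd_def by (metis inner_zero_left matrix_vector_mult_0_right order.refl less_imp_le)

lemma pd_add_psd: "pd R \<Longrightarrow> psd P \<Longrightarrow> pd (R + P)"
  unfolding pd_def psd_def
  by (simp add: transpose_add matrix_vector_mult_add_rdistrib inner_add_right add_pos_nonneg)

lemma pd_scaleR: "0 < c \<Longrightarrow> pd P \<Longrightarrow> pd (c *\<^sub>R P)"
  by (simp add: pd_def transpose_scalar scaleR_matrix_vector_assoc[symmetric])

lemma pd_mat_1: "pd (mat 1 :: real^'n^'n)"
  by (simp add: pd_def)

lemma loewner_geI:
  fixes X Y :: "real^'n^'n"
  assumes "transpose X = X" "transpose Y = Y" "\<And>x. x \<bullet> (Y *v x) \<le> x \<bullet> (X *v x)"
  shows "loewner_ge X Y"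
  using assms
  by (simp add: loewner_ge_def psd_def transpose_diff matrix_vector_mult_diff_rdistrib inner_diff_right)

lemma loewner_geD: "loewner_ge X Y \<Longrightarrow> x \<bullet> (Y *v x) \<le> x \<bullet> (X *v x)"
  by (simp add: loewner_ge_def psd_def matrix_vector_mult_diff_rdistrib inner_diff_right)

lemma loewner_ge_refl: "transpose X = X \<Longrightarrow> loewner_ge X X"
  by (rule loewner_geI) auto

lemma loewner_ge_trans: "loewner_ge X Y \<Longrightarrow> loewner_ge Y Z \<Longrightarrow> loewner_ge X Z"
  unfolding loewner_ge_def by (drule (1) psd_add) (simp add: algebra_simps)

lemma psd_loewner_ge: "loewner_ge X Y \<Longrightarrow> psd Y \<Longrightarrow> psd X"
  unfolding loewner_ge_def by (drule (1) psd_add) simp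

lemma loewner_ge_congruence:
  "loewner_ge P Q \<Longrightarrow> loewner_ge (transpose X ** P ** X) (transpose X ** Q ** X)"
  unfolding loewner_ge_def by (drule psd_congruence[of _ X]) (simp add: matrix_mul_diff_middle)

lemma loewner_ge_scaleR: "0 \<le> c \<Longrightarrow> loewner_ge X Y \<Longrightarrow> loewner_ge (c *\<^sub>R X) (c *\<^sub>R Y)"
  unfolding loewner_ge_def by (drule (1) psd_scaleR) (simp add: scaleR_diff_right)

lemma loewner_ge_diff: "loewner_ge X Y \<Longrightarrow> loewner_ge (Z - Y) (Z - X)"
  by (simp add: loewner_ge_def)

lemma loewner_ge_diff_psd: "psd X \<Longrightarrow> loewner_ge Z (Z - X)"
  by (simp add: loewner_ge_def)

section \<open>The positive semidefinite square root\<close>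

lemma psd_square_root_on_eigenvector:
  fixes S :: "real^'n^'n"
  assumes S: "psd S" and u: "(S ** S) *v u = c *\<^sub>R u" and c: "0 \<le> c"
  shows "S *v u = sqrt c *\<^sub>R u"
proof (cases "c = 0")
  case True
  with u quadratic_form_square[OF psd_symmetric[OF S], of u] show ?thesis by simp
next
  case False
  define w where "w = S *v u - sqrt c *\<^sub>R u"
  have "S *v w = (sqrt c * sqrt c) *\<^sub>R u - sqrt c *\<^sub>R (S *v u)"
    using u c by (simp add: w_def matrix_vector_mult_diff_distrib matrix_vector_mult_scaleR
        matrix_vector_mul_assoc)
  then have "S *v w = - sqrt c *\<^sub>R w" by (simp add: w_def algebra_simps)
  then have "0 \<le> - sqrt c * (w \<bullet> w)" using psd_quadratic_nonneg[OF S, of w] by simp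
  moreover have "0 < sqrt c" using c False by simp
  ultimately have "w \<bullet> w \<le> 0" by (simp add: mult_le_0_iff)
  then have "w = 0" by (metis antisym inner_eq_zero_iff inner_ge_zero)
  then show ?thesis by (simp add: w_def)
qed

lemma psd_square_root_unique:
  fixes S S' :: "real^'n^'n"
  assumes "psd S" "psd S'" "S' ** S' = S ** S"
  shows "S' = S"
proof -
  have "transpose (S ** S) = S ** S"
    using psd_symmetric[OF assms(1)] by (simp add: matrix_transpose_mul)
  then obtain U where U: "orthonormal_eigenvectors (S ** S) U" "span U = UNIV"
    using symmetric_matrix_orthonormal_eigenbasis by blast
  have "S' *v u = S *v u" if "u \<in> U" for u
  proof -
    define c where "c = u \<bullet> ((S ** S) *v u)"
    have "0 \<le> c" unfolding c_def quadratic_form_square[OF psd_symmetric[OF assms(1)]] by simp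
    moreover have "(S ** S) *v u = c *\<^sub>R u" using U(1) that by (simp add: orthonormal_eigenvectors_def c_def)
    ultimately show ?thesis
      using psd_square_root_on_eigenvector assms by metis
  qed
  then have "S' *v x = S *v x" for x
    using linear_eq_on_span[of "(*v) S'" "(*v) S" U x] U(2) by auto
  then show ?thesis by (simp add: matrix_eq)
qed

lemma psd_square_root_exists:
  fixes M :: "real^'n^'n"
  assumes M: "psd M"
  obtains S where "psd S" "S ** S = M"
proof -
  obtain U where U: "orthonormal_eigenvectors M U" "finite U" "span U = UNIV"
    using symmetric_matrix_orthonormal_eigenbasis psd_symmetric[OF M] by blast
  define r where "r u = sqrt (u \<bullet> (M *v u))" for u
  define S where "S = matrix (\<lambda>x. \<Sum>u\<in>U. (r u * (u \<bullet> x)) *\<^sub>R u)"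
  have lin: "linear (\<lambda>x. \<Sum>u\<in>U. (r u * (u \<bullet> x)) *\<^sub>R u)"
    by (intro linearI)
      (simp_all add: inner_add_right distrib_left scaleR_add_left sum.distrib scaleR_sum_right
        mult.left_commute)
  have Sx: "S *v x = (\<Sum>u\<in>U. (r u * (u \<bullet> x)) *\<^sub>R u)" for x
    using fun_cong[OF matrix_vector_mul(2)[OF lin]] by (simp add: S_def)
  have quad: "y \<bullet> (S *v x) = (\<Sum>u\<in>U. r u * (u \<bullet> x) * (u \<bullet> y))" for x y
    by (simp add: Sx inner_sum_right inner_commute)
  have "psd S"
    unfolding psd_def
  proof
    show "transpose S = S" by (rule symmetric_matrixI) (simp add: quad mult_ac)
    show "\<forall>x. 0 \<le> x \<bullet> (S *v x)"
      by (auto simp: quad r_def psd_quadratic_nonneg[OF M] mult.assoc intro!: sum_nonneg)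
  qed
  have Su: "S *v v = r v *\<^sub>R v" if "v \<in> U" for v
  proof -
    have "u \<bullet> v = (if u = v then 1 else 0)" if "u \<in> U" for u
      using U(1) \<open>v \<in> U\<close> that
      by (auto simp: orthonormal_eigenvectors_def pairwise_def orthogonal_def norm_eq_1)
    then have "(\<Sum>u\<in>U. (r u * (u \<bullet> v)) *\<^sub>R u) = (\<Sum>u\<in>U. if u = v then r v *\<^sub>R v else 0)"
      by (intro sum.cong) auto
    then show ?thesis using U(2) that by (simp add: Sx)
  qed
  have "(S ** S) *v v = M *v v" if "v \<in> U" for v
  proof -
    have "(S ** S) *v v = (r v * r v) *\<^sub>R v"
      by (simp add: Su that matrix_vector_mul_assoc[symmetric] matrix_vector_mult_scaleR)
    also have "\<dots> = (v \<bullet> (M *v v)) *\<^sub>R v" by (simp add: r_def psd_quadratic_nonneg[OF M])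
    also have "\<dots> = M *v v" using U(1) that by (simp add: orthonormal_eigenvectors_def)
    finally show ?thesis .
  qed
  then have "(S ** S) *v x = M *v x" for x
    using linear_eq_on_span[of "(*v) (S ** S)" "(*v) M" U x] U(3) by auto
  then have "S ** S = M" by (simp add: matrix_eq)
  with \<open>psd S\<close> show thesis by (rule that)
qed

lemma psd_psd_sqrt:
  assumes "psd M"
  shows "psd (psd_sqrt M)"
proof -
  have "\<exists>!S. psd S \<and> S ** S = M"
    using psd_square_root_exists[OF assms] psd_square_root_unique by blast
  then show ?thesis unfolding psd_sqrt_def by (rule theI'[THEN conjunct1])
qed

section \<open>Inverses of positive definite matrices\<close>

lemma pd_invertible:
  fixes M :: "real^'n^'n"
  assumes "pd M"
  shows "invertible M"
proof -
  have "inj ((*v) M)"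
  proof (rule injI)
    fix x y assume "M *v x = M *v y"
    then have "(x - y) \<bullet> (M *v (x - y)) = 0" by (simp add: matrix_vector_mult_diff_distrib)
    with assms show "x = y" unfolding pd_def by (metis less_irrefl right_minus_eq)
  qed
  then show ?thesis using invertible_left_inverse matrix_left_invertible_injective by blast
qed

lemma matrix_inv_right_left:
  "invertible M \<Longrightarrow> M ** matrix_inv M = mat 1 \<and> matrix_inv M ** M = mat 1"
  unfolding invertible_def matrix_inv_def by (rule someI_ex)

lemma matrix_inv_unique:
  fixes A X :: "real^'n^'n"
  assumes "A ** X = mat 1" "X ** A = mat 1"
  shows "matrix_inv A = X"
proof -
  have "invertible A" using assms by (auto simp: invertible_def)
  then have "matrix_inv A ** A = mat 1" using matrix_inv_right_left by blast
  then have "matrix_inv A = matrix_inv A ** (A ** X)" using assms(1) by simp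
  also have "\<dots> = X" using \<open>matrix_inv A ** A = mat 1\<close> by (simp add: matrix_mul_assoc)
  finally show ?thesis .
qed

lemma matrix_inv_cancel: "invertible M \<Longrightarrow> M *v (matrix_inv M *v y) = (y::real^'n)"
  using matrix_inv_right_left[of M] by (simp add: matrix_vector_mul_assoc)

lemma symmetric_matrix_inv:
  fixes M :: "real^'n^'n"
  assumes "invertible M" "transpose M = M"
  shows "transpose (matrix_inv M) = matrix_inv M"
proof -
  have "M ** transpose (matrix_inv M) = mat 1" "transpose (matrix_inv M) ** M = mat 1"
    using arg_cong[where f=transpose, OF conjunct2[OF matrix_inv_right_left[OF assms(1)]]]
      arg_cong[where f=transpose, OF conjunct1[OF matrix_inv_right_left[OF assms(1)]]]
    by (simp_all add: matrix_transpose_mul assms(2))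
  then show ?thesis by (rule matrix_inv_unique[symmetric])
qed

lemma matrix_inv_scaleR:
  fixes M :: "real^'n^'n"
  assumes "invertible M" "c \<noteq> 0"
  shows "matrix_inv (c *\<^sub>R M) = inverse c *\<^sub>R matrix_inv M"
  using matrix_inv_right_left[OF assms(1)] assms(2)
  by (intro matrix_inv_unique) (simp_all add: matrix_scalar_ac scalar_matrix_assoc[symmetric])

lemma matrix_inv_quadratic_ge:
  fixes M :: "real^'n^'n"
  assumes "psd M" "invertible M"
  shows "2 * (v \<bullet> y) - v \<bullet> (M *v v) \<le> y \<bullet> (matrix_inv M *v y)"
proof -
  define z where "z = matrix_inv M *v y"
  have "M *v z = y" unfolding z_def by (rule matrix_inv_cancel[OF assms(2)])
  have "0 \<le> (v - z) \<bullet> (M *v (v - z))" using assms(1) by (rule psd_quadratic_nonneg)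
  also have "\<dots> = v \<bullet> (M *v v) - 2 * (v \<bullet> y) + z \<bullet> y"
    using inner_symmetric_matrix[OF psd_symmetric[OF assms(1)], of z v] \<open>M *v z = y\<close>
    by (simp add: matrix_vector_mult_diff_distrib inner_diff_left inner_diff_right inner_commute)
  finally show ?thesis by (simp add: z_def inner_commute)
qed

lemma pd_matrix_inv:
  fixes M :: "real^'n^'n"
  assumes "pd M"
  shows "pd (matrix_inv M)"
  unfolding pd_def
proof (intro conjI allI impI)
  have "invertible M" using assms by (rule pd_invertible)
  then show "transpose (matrix_inv M) = matrix_inv M"
    using assms by (simp add: symmetric_matrix_inv pd_def)
  fix y :: "real^'n" assume "y \<noteq> 0"
  define z where "z = matrix_inv M *v y"
  have "M *v z = y" unfolding z_def by (rule matrix_inv_cancel[OF \<open>invertible M\<close>])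
  with \<open>y \<noteq> 0\<close> have "z \<noteq> 0" by auto
  with assms have "0 < z \<bullet> (M *v z)" by (simp add: pd_def)
  with \<open>M *v z = y\<close> show "0 < y \<bullet> (matrix_inv M *v y)" by (simp add: z_def inner_commute)
qed

lemma loewner_ge_matrix_inv:
  fixes X Y :: "real^'n^'n"
  assumes X: "pd X" and Y: "pd Y" and XY: "loewner_ge X Y"
  shows "loewner_ge (matrix_inv Y) (matrix_inv X)"
proof (rule loewner_geI)
  show "transpose (matrix_inv Y) = matrix_inv Y" "transpose (matrix_inv X) = matrix_inv X"
    using pd_matrix_inv[OF X] pd_matrix_inv[OF Y] by (simp_all add: pd_def)
  fix y
  define z where "z = matrix_inv X *v y"
  have "y \<bullet> (matrix_inv X *v y) = 2 * (z \<bullet> y) - z \<bullet> (X *v z)"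
    using matrix_inv_cancel[OF pd_invertible[OF X], of y] by (simp add: z_def inner_commute)
  also have "\<dots> \<le> 2 * (z \<bullet> y) - z \<bullet> (Y *v z)" using loewner_geD[OF XY] by simp
  also have "\<dots> \<le> y \<bullet> (matrix_inv Y *v y)"
    by (rule matrix_inv_quadratic_ge[OF pd_imp_psd[OF Y] pd_invertible[OF Y]])
  finally show "y \<bullet> (matrix_inv X *v y) \<le> y \<bullet> (matrix_inv Y *v y)" .
qed

lemma loewner_ge_matrix_inv_push_through:
  fixes C :: "real^'m^'m" and X :: "real^'k^'m"
  assumes C: "pd C"
  shows "loewner_ge (matrix_inv C) (X ** matrix_inv (mat 1 + transpose X ** C ** X) ** transpose X)"
proof -
  define N where "N = mat 1 + transpose X ** C ** X"
  have "pd N" unfolding N_def using C by (intro pd_add_psd pd_mat_1 psd_congruence pd_imp_psd)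
  have "psd (X ** matrix_inv N ** transpose X)"
    using psd_congruence[OF pd_imp_psd[OF pd_matrix_inv[OF \<open>pd N\<close>]], of "transpose X"] by simp
  show ?thesis unfolding N_def[symmetric]
  proof (rule loewner_geI)
    show "transpose (matrix_inv C) = matrix_inv C"
      using pd_matrix_inv[OF C] by (simp add: pd_def)
    show "transpose (X ** matrix_inv N ** transpose X) = X ** matrix_inv N ** transpose X"
      using \<open>psd (X ** matrix_inv N ** transpose X)\<close> by (rule psd_symmetric)
    fix y
    define w where "w = transpose X *v y"
    define z where "z = matrix_inv N *v w"
    have "N *v z = w" unfolding z_def by (intro matrix_inv_cancel pd_invertible \<open>pd N\<close>)
    then have "w = z + (transpose X ** C ** X) *v z"
      by (simp add: N_def matrix_vector_mult_add_rdistrib)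
    then have wz: "z \<bullet> w = z \<bullet> z + (X *v z) \<bullet> (C *v (X *v z))"
      by (simp add: inner_add_right quadratic_form_congruence)
    txt \<open>The bound for C^-1 is tested on the vector X z.\<close>
    have "y \<bullet> ((X ** matrix_inv N ** transpose X) *v y) = w \<bullet> z"
      using quadratic_form_congruence[of y "transpose X" "matrix_inv N"] by (simp add: w_def z_def)
    also have "\<dots> \<le> 2 * ((X *v z) \<bullet> y) - (X *v z) \<bullet> (C *v (X *v z))"
      using wz inner_transpose_matrix[of z X y] inner_ge_zero[of z] inner_commute[of w z]
        inner_commute[of y "X *v z"]
      unfolding w_def by linarith
    also have "\<dots> \<le> y \<bullet> (matrix_inv C *v y)"
      using C by (intro matrix_inv_quadratic_ge pd_imp_psd pd_invertible)
    finally show "y \<bullet> ((X ** matrix_inv N ** transpose X) *v y) \<le> y \<bullet> (matrix_inv C *v y)" .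
  qed
qed

section \<open>The Riccati step\<close>

definition riccati_step :: "real^'n^'n \<Rightarrow> real^'m^'n \<Rightarrow> real^'m^'m \<Rightarrow> real^'n^'n \<Rightarrow> real^'n^'n" where
  "riccati_step A B R P = transpose A ** P ** A
     - transpose A ** P ** B ** matrix_inv (R + transpose B ** P ** B) ** transpose B ** P ** A"

definition one_step_cost ::
  "real^'n^'n \<Rightarrow> real^'m^'n \<Rightarrow> real^'m^'m \<Rightarrow> real^'n^'n \<Rightarrow> real^'n \<Rightarrow> real^'m \<Rightarrow> real" where
  "one_step_cost A B R P x u = (A *v x + B *v u) \<bullet> (P *v (A *v x + B *v u)) + u \<bullet> (R *v u)"

lemma riccati_step_congruence_form:
  assumes "transpose P = P"
  shows "riccati_step A B R P = transpose A ** P ** A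
    - transpose (transpose B ** P ** A) ** matrix_inv (R + transpose B ** P ** B) ** (transpose B ** P ** A)"
  using assms by (simp add: riccati_step_def matrix_transpose_mul matrix_mul_assoc)

lemma riccati_step_quadratic_form:
  assumes "transpose P = P"
  shows "x \<bullet> (riccati_step A B R P *v x) = (A *v x) \<bullet> (P *v (A *v x))
    - (transpose B *v (P *v (A *v x))) \<bullet> (matrix_inv (R + transpose B ** P ** B) *v (transpose B *v (P *v (A *v x))))"
  unfolding riccati_step_congruence_form[OF assms] matrix_vector_mult_diff_rdistrib inner_diff_right
    quadratic_form_congruence
  by (simp add: matrix_vector_mul_assoc matrix_mul_assoc)

lemma one_step_cost_expand:
  assumes "transpose P = P"
  shows "one_step_cost A B R P x u = (A *v x) \<bullet> (P *v (A *v x)) + 2 * (u \<bullet> (transpose B *v (P *v (A *v x))))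
    + u \<bullet> ((R + transpose B ** P ** B) *v u)"
proof -
  have "(B *v u) \<bullet> (P *v (A *v x)) = u \<bullet> (transpose B *v (P *v (A *v x)))"
    by (simp only: inner_transpose_matrix)
  moreover have "(A *v x) \<bullet> (P *v (B *v u)) = (B *v u) \<bullet> (P *v (A *v x))"
    by (rule inner_symmetric_matrix[OF assms])
  ultimately show ?thesis
    by (simp add: one_step_cost_def quadratic_form_congruence matrix_vector_right_distrib inner_add_left
        inner_add_right matrix_vector_mult_add_rdistrib del: transpose_matrix_vector)
qed

lemma riccati_step_le_one_step_cost:
  assumes "pd R" "psd P"
  shows "x \<bullet> (riccati_step A B R P *v x) \<le> one_step_cost A B R P x u"
proof -
  define G where "G = R + transpose B ** P ** B"
  define y where "y = transpose B *v (P *v (A *v x))"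
  have "pd G" using assms by (simp add: G_def pd_add_psd psd_congruence)
  then have "2 * ((- u) \<bullet> y) - (- u) \<bullet> (G *v (- u)) \<le> y \<bullet> (matrix_inv G *v y)"
    by (intro matrix_inv_quadratic_ge pd_imp_psd pd_invertible)
  moreover have "x \<bullet> (riccati_step A B R P *v x) = (A *v x) \<bullet> (P *v (A *v x)) - y \<bullet> (matrix_inv G *v y)"
    unfolding G_def y_def by (rule riccati_step_quadratic_form[OF psd_symmetric[OF assms(2)]])
  moreover have "one_step_cost A B R P x u = (A *v x) \<bullet> (P *v (A *v x)) + 2 * (u \<bullet> y) + u \<bullet> (G *v u)"
    unfolding G_def y_def by (rule one_step_cost_expand[OF psd_symmetric[OF assms(2)]])
  ultimately show ?thesis by (simp add: matrix_vector_mult_uminus)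
qed

lemma riccati_step_one_step_cost_attained:
  assumes "pd R" "psd P"
  obtains u where "x \<bullet> (riccati_step A B R P *v x) = one_step_cost A B R P x u"
proof -
  define G where "G = R + transpose B ** P ** B"
  define y where "y = transpose B *v (P *v (A *v x))"
  define z where "z = matrix_inv G *v y"
  have "pd G" using assms by (simp add: G_def pd_add_psd psd_congruence)
  then have "G *v z = y" unfolding z_def by (intro matrix_inv_cancel pd_invertible)
  have "x \<bullet> (riccati_step A B R P *v x) = (A *v x) \<bullet> (P *v (A *v x)) - y \<bullet> z"
    unfolding G_def y_def z_def by (rule riccati_step_quadratic_form[OF psd_symmetric[OF assms(2)]])
  also have "\<dots> = one_step_cost A B R P x (- z)"
    unfolding one_step_cost_expand[OF psd_symmetric[OF assms(2)]] G_def[symmetric] y_def[symmetric]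
    using \<open>G *v z = y\<close> by (simp add: matrix_vector_mult_uminus inner_commute)
  finally show thesis by (rule that)
qed

lemma riccati_step_symmetric:
  assumes "pd R" "psd P"
  shows "transpose (riccati_step A B R P) = riccati_step A B R P"
proof -
  have "pd (matrix_inv (R + transpose B ** P ** B))"
    using assms by (intro pd_matrix_inv pd_add_psd psd_congruence)
  then show ?thesis
    using psd_symmetric[OF assms(2)]
    by (simp add: riccati_step_congruence_form pd_def transpose_diff matrix_transpose_mul matrix_mul_assoc)
qed

lemma psd_riccati_step:
  assumes "pd R" "psd P"
  shows "psd (riccati_step A B R P)"
  unfolding psd_def
proof (intro conjI allI)
  show "transpose (riccati_step A B R P) = riccati_step A B R P"
    using assms by (rule riccati_step_symmetric)
  fix x
  obtain u where "x \<bullet> (riccati_step A B R P *v x) = one_step_cost A B R P x u"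
    using riccati_step_one_step_cost_attained[OF assms] .
  then show "0 \<le> x \<bullet> (riccati_step A B R P *v x)"
    using assms by (simp add: one_step_cost_def psd_quadratic_nonneg pd_imp_psd)
qed

lemma riccati_step_mono:
  assumes R: "pd R" and Q: "psd Q" and PQ: "loewner_ge P Q"
  shows "loewner_ge (riccati_step A B R P) (riccati_step A B R Q)"
proof -
  have P: "psd P" using PQ Q by (rule psd_loewner_ge)
  show ?thesis
  proof (rule loewner_geI)
    show "transpose (riccati_step A B R P) = riccati_step A B R P"
      "transpose (riccati_step A B R Q) = riccati_step A B R Q"
      using R P Q by (simp_all add: riccati_step_symmetric)
    fix x
    obtain u where u: "x \<bullet> (riccati_step A B R P *v x) = one_step_cost A B R P x u"
      using riccati_step_one_step_cost_attained[OF R P] .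
    have "x \<bullet> (riccati_step A B R Q *v x) \<le> one_step_cost A B R Q x u"
      by (rule riccati_step_le_one_step_cost[OF R Q])
    also have "\<dots> \<le> one_step_cost A B R P x u"
      using loewner_geD[OF PQ] by (simp add: one_step_cost_def)
    finally show "x \<bullet> (riccati_step A B R Q *v x) \<le> x \<bullet> (riccati_step A B R P *v x)"
      unfolding u .
  qed
qed

section \<open>The soft Riccati step\<close>

definition soft_riccati_step ::
  "real \<Rightarrow> real^'m^'m \<Rightarrow> real^'n^'n \<Rightarrow> real^'m^'n \<Rightarrow> real^'m^'m \<Rightarrow> real^'n^'n \<Rightarrow> real^'n^'n" where
  "soft_riccati_step \<epsilon> S A B R P = transpose A ** P ** A
     - (1/\<epsilon>) *\<^sub>R (transpose A ** P ** B ** S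
        ** matrix_inv (mat 1 + S ** ((1/\<epsilon>) *\<^sub>R (R + transpose B ** P ** B)) ** S) ** S ** transpose B ** P ** A)"

lemma Pi_step_eq_soft_riccati_step:
  "Pi_step \<epsilon> A B R Sig k = soft_riccati_step \<epsilon> (psd_sqrt (Sig k)) (A k) (B k) (R k)"
  by (simp add: fun_eq_iff Pi_step_def soft_riccati_step_def Let_def)

context
  fixes \<epsilon> :: real and S :: "real^'m^'m" and A :: "real^'n^'n" and B :: "real^'m^'n"
    and R :: "real^'m^'m" and P :: "real^'n^'n"
  assumes \<epsilon>: "\<epsilon> > 0" and S: "transpose S = S" and R: "pd R" and P: "psd P"
begin

lemma soft_riccati_step_congruence_form:
  "soft_riccati_step \<epsilon> S A B R P = transpose A ** P ** A
     - (1/\<epsilon>) *\<^sub>R (transpose (transpose B ** P ** A)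
        ** (S ** matrix_inv (mat 1 + transpose S ** ((1/\<epsilon>) *\<^sub>R (R + transpose B ** P ** B)) ** S) ** transpose S)
        ** (transpose B ** P ** A))"
  using psd_symmetric[OF P] S
  by (simp add: soft_riccati_step_def matrix_transpose_mul matrix_mul_assoc)

lemma riccati_step_scaled_congruence_form:
  "riccati_step A B R P = transpose A ** P ** A
     - (1/\<epsilon>) *\<^sub>R (transpose (transpose B ** P ** A)
        ** matrix_inv ((1/\<epsilon>) *\<^sub>R (R + transpose B ** P ** B)) ** (transpose B ** P ** A))"
proof -
  have "invertible (R + transpose B ** P ** B)"
    using R P by (intro pd_invertible pd_add_psd psd_congruence)
  then show ?thesis
    using \<epsilon> by (simp add: riccati_step_congruence_form[OF psd_symmetric[OF P]] matrix_inv_scaleR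
        matrix_scalar_ac scalar_matrix_assoc[symmetric])
qed

lemma pd_soft_riccati_weight: "pd ((1/\<epsilon>) *\<^sub>R (R + transpose B ** P ** B))"
  using \<epsilon> R P by (intro pd_scaleR pd_add_psd psd_congruence) simp_all

lemma soft_riccati_step_le: "loewner_ge (transpose A ** P ** A) (soft_riccati_step \<epsilon> S A B R P)"
proof -
  define N where "N = mat 1 + transpose S ** ((1/\<epsilon>) *\<^sub>R (R + transpose B ** P ** B)) ** S"
  have "pd N"
    unfolding N_def by (rule pd_add_psd[OF pd_mat_1 psd_congruence[OF pd_imp_psd[OF pd_soft_riccati_weight]]])
  then have "psd (S ** matrix_inv N ** transpose S)"
    using psd_congruence[OF pd_imp_psd[OF pd_matrix_inv], of N "transpose S"] by simp
  then have "psd ((1/\<epsilon>) *\<^sub>R (transpose (transpose B ** P ** A) ** (S ** matrix_inv N ** transpose S)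
      ** (transpose B ** P ** A)))"
    using \<epsilon> by (intro psd_scaleR psd_congruence) simp_all
  then show ?thesis
    unfolding soft_riccati_step_congruence_form N_def[symmetric] by (rule loewner_ge_diff_psd)
qed

lemma soft_riccati_step_ge: "loewner_ge (soft_riccati_step \<epsilon> S A B R P) (riccati_step A B R P)"
  unfolding soft_riccati_step_congruence_form riccati_step_scaled_congruence_form
  using \<epsilon> by (intro loewner_ge_diff loewner_ge_scaleR loewner_ge_congruence
      loewner_ge_matrix_inv_push_through[OF pd_soft_riccati_weight]) simp

end

lemma bwd_last: "bwd T F step T = F"
  by (simp add: bwd_def)

lemma bwd_step:
  assumes "k < T"
  shows "bwd T F step k = step k (bwd T F step (Suc k))"
proof -
  have "T - k = Suc (T - Suc k)" "T - Suc (T - Suc k) = k" using assms by simp_all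
  then show ?thesis by (simp add: bwd_def)
qed

lemma loewner_ge_scaleR_matrix_inv_congruence:
  assumes "0 \<le> \<epsilon>" "pd R" "psd Q" "loewner_ge P Q"
  shows "loewner_ge (\<epsilon> *\<^sub>R matrix_inv (R + transpose B ** Q ** B)) (\<epsilon> *\<^sub>R matrix_inv (R + transpose B ** P ** B))"
proof -
  have "psd P" using assms(4,3) by (rule psd_loewner_ge)
  have "loewner_ge (R + transpose B ** P ** B) (R + transpose B ** Q ** B)"
    using loewner_ge_congruence[OF assms(4), of B] by (simp add: loewner_ge_def)
  with assms \<open>psd P\<close> show ?thesis
    by (intro loewner_ge_scaleR loewner_ge_matrix_inv pd_add_psd psd_congruence)
qed

lemma Pi_sandwich:
  assumes \<epsilon>: "\<epsilon> > 0" and R: "\<And>k. k < T \<Longrightarrow> pd (R k)" and F: "psd F"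
    and Sig: "\<And>k. k < T \<Longrightarrow> psd (Sig k)" and "k \<le> T"
  shows "loewner_ge (Pi_hat A F T k) (Pi \<epsilon> A B R F Sig T k)
    \<and> loewner_ge (Pi \<epsilon> A B R F Sig T k) (Pi_check A B R F T k) \<and> psd (Pi_check A B R F T k)"
  using \<open>k \<le> T\<close>
proof (induction k rule: inc_induct)
  case base
  show ?case
    using F loewner_ge_refl[OF psd_symmetric[OF F]] by (simp add: Pi_def Pi_check_def Pi_hat_def bwd_last)
next
  case (step k)
  let ?H = "Pi_hat A F T (Suc k)" and ?P = "Pi \<epsilon> A B R F Sig T (Suc k)" and ?C = "Pi_check A B R F T (Suc k)"
  have HP: "loewner_ge ?H ?P" and PC: "loewner_ge ?P ?C" and C: "psd ?C" using step.IH by auto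
  have P: "psd ?P" using PC C by (rule psd_loewner_ge)
  have S: "transpose (psd_sqrt (Sig k)) = psd_sqrt (Sig k)"
    using Sig step.hyps(2) by (intro psd_symmetric psd_psd_sqrt)
  have Pk: "Pi \<epsilon> A B R F Sig T k = soft_riccati_step \<epsilon> (psd_sqrt (Sig k)) (A k) (B k) (R k) ?P"
    using step.hyps(2) by (simp add: Pi_def bwd_step Pi_step_eq_soft_riccati_step)
  have Ck: "Pi_check A B R F T k = riccati_step (A k) (B k) (R k) ?C"
    using step.hyps(2) by (simp add: Pi_check_def bwd_step riccati_step_def)
  have Hk: "Pi_hat A F T k = transpose (A k) ** ?H ** A k"
    using step.hyps(2) by (simp add: Pi_hat_def bwd_step)
  have "loewner_ge (Pi_hat A F T k) (Pi \<epsilon> A B R F Sig T k)"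
    unfolding Hk Pk using \<epsilon> S R[OF step.hyps(2)] P
    by (blast intro: loewner_ge_trans loewner_ge_congruence[OF HP] soft_riccati_step_le)
  moreover have "loewner_ge (Pi \<epsilon> A B R F Sig T k) (Pi_check A B R F T k)"
    unfolding Pk Ck using \<epsilon> S R[OF step.hyps(2)] P C
    by (blast intro: loewner_ge_trans soft_riccati_step_ge riccati_step_mono[OF _ C PC])
  moreover have "psd (Pi_check A B R F T k)"
    unfolding Ck using R[OF step.hyps(2)] C by (rule psd_riccati_step)
  ultimately show ?case by blast
qed

theorem lemma2:
  fixes \<epsilon> :: real and T :: nat
    and A :: "nat \<Rightarrow> real^'n^'n" and B :: "nat \<Rightarrow> real^'m^'n"
    and R :: "nat \<Rightarrow> real^'m^'m" and F :: "real^'n^'n"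
    and Sig :: "nat \<Rightarrow> real^'m^'m"
  assumes "T \<ge> 1" and "\<epsilon> > 0"
    and "\<And>k. k < T \<Longrightarrow> pd (R k)"
    and "psd F"
    and "\<And>k. k < T \<Longrightarrow> psd (Sig k)"
  shows "(\<forall>k\<le>T. loewner_ge (Pi_hat A F T k) (Pi \<epsilon> A B R F Sig T k)
                 \<and> loewner_ge (Pi \<epsilon> A B R F Sig T k) (Pi_check A B R F T k)
                 \<and> psd (Pi_check A B R F T k))
       \<and> (\<forall>k<T. loewner_ge (\<epsilon> *\<^sub>R matrix_inv (R k + transpose (B k) ** Pi_check A B R F T (Suc k) ** B k))
                             (SigmaQ \<epsilon> A B R F Sig T k)
                 \<and> loewner_ge (SigmaQ \<epsilon> A B R F Sig T k)
                             (\<epsilon> *\<^sub>R matrix_inv (R k + transpose (B k) ** Pi_hat A F T (Suc k) ** B k))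
                 \<and> pd (\<epsilon> *\<^sub>R matrix_inv (R k + transpose (B k) ** Pi_hat A F T (Suc k) ** B k)))"
proof (intro conjI allI impI)
  fix k assume "k \<le> T"
  with assms show "loewner_ge (Pi_hat A F T k) (Pi \<epsilon> A B R F Sig T k)"
    "loewner_ge (Pi \<epsilon> A B R F Sig T k) (Pi_check A B R F T k)" "psd (Pi_check A B R F T k)"
    using Pi_sandwich by blast+
next
  fix k assume "k < T"
  let ?H = "Pi_hat A F T (Suc k)" and ?P = "Pi \<epsilon> A B R F Sig T (Suc k)" and ?C = "Pi_check A B R F T (Suc k)"
  have HP: "loewner_ge ?H ?P" and PC: "loewner_ge ?P ?C" and C: "psd ?C"
    using Pi_sandwich[where k = "Suc k", OF assms(2-5)] \<open>k < T\<close> by auto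
  have P: "psd ?P" using PC C by (rule psd_loewner_ge)
  have H: "psd ?H" using HP P by (rule psd_loewner_ge)
  have R: "pd (R k)" using assms(3) \<open>k < T\<close> .
  show "loewner_ge (\<epsilon> *\<^sub>R matrix_inv (R k + transpose (B k) ** ?C ** B k)) (SigmaQ \<epsilon> A B R F Sig T k)"
    "loewner_ge (SigmaQ \<epsilon> A B R F Sig T k) (\<epsilon> *\<^sub>R matrix_inv (R k + transpose (B k) ** ?H ** B k))"
    unfolding SigmaQ_def using assms(2) R C P HP PC
    by (auto intro: loewner_ge_scaleR_matrix_inv_congruence)
  show "pd (\<epsilon> *\<^sub>R matrix_inv (R k + transpose (B k) ** ?H ** B k))"
    using assms(2) R H by (intro pd_scaleR pd_matrix_inv pd_add_psd psd_congruence)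
qed

end
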